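(* Let $M\ge 2$ and let $\mathcal{P}$ be a Class I source set on $\{1,\dots,M\}$, i.e. a nonempty set of probability distributions on $\{1,\dots,M\}$ whose convex hull contains the uniform distribution $(1/M,\dots,1/M)$. Then for every $D\in(0,1]$, \[ \epsilon^*_{\mathrm{DP}}(\mathcal{P},D)=\begin{cases}\log\left((M-1)\frac{1-D}{D}\right), & 0<D<\frac{M-1}{M},\\[2pt] 0, & \frac{M-1}{M}\le D\le 1.\end{cases} \]
   Context: A mechanism is an $M\times M$ row-stochastic matrix $Q$ with entries $Q(j|i)$ = probability of releasing $j$ when the input is $i$, $i,j\in\{1,\dots,M\}$. Its diagonal distortions are $D_i=1-Q(i|i)$. Distortion is Hamming distortion, so the average distortion under a source distribution $P=(P_1,\dots,P_M)$ is $\sum_{i=1}^M P_iD_i$. A mechanism $Q$ is $(\mathcal{P},D)$-valid if $\sum_{i=1}^M P_iD_i\le D$ for every $P\in\mathcal{P}$; $\mathcal{Q}(\mathcal{P},D)$ denotes the set of all such mechanisms. The differential privacy leakage of $Q$ is $\epsilon_{\mathrm{DP}}(Q)=\min\{\epsilon\ge 0: Q(\hat x|x_1)\le e^{\epsilon}Q(\hat x|x_2)\text{ for all }x_1,x_2,\hat x\in\{1,\dots,M\}\}$ (equal to $+\infty$ if no finite $\epsilon$ works; all-zero columns are allowed). For $0<D\le 1$, $\epsilon^*_{\mathrm{DP}}(\mathcal{P},D)=\min_{Q\in\mathcal{Q}(\mathcal{P},D)}\epsilon_{\mathrm{DP}}(Q)$. Logarithms are natural. *)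

theory Defs
  imports "HOL-Analysis.Analysis"
begin

definition prob_dist :: "nat \<Rightarrow> (nat \<Rightarrow> real) \<Rightarrow> bool" where
  "prob_dist M P \<longleftrightarrow> (\<forall>i\<in>{1..M}. P i \<ge> 0) \<and> (\<Sum>i\<in>{1..M}. P i) = 1
     \<and> (\<forall>i. i \<notin> {1..M} \<longrightarrow> P i = 0)"

definition uniform_dist :: "nat \<Rightarrow> nat \<Rightarrow> real" where
  "uniform_dist M = (\<lambda>i. if i \<in> {1..M} then 1 / real M else 0)"

definition in_conv_hull :: "nat \<Rightarrow> (nat \<Rightarrow> real) \<Rightarrow> (nat \<Rightarrow> real) set \<Rightarrow> bool" where
  "in_conv_hull M R \<P> \<longleftrightarrow> (\<exists>S w. finite S \<and> S \<noteq> {} \<and> S \<subseteq> \<P> \<and> (\<forall>P\<in>S. w P \<ge> (0::real))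
      \<and> (\<Sum>P\<in>S. w P) = 1 \<and> (\<forall>i. (\<Sum>P\<in>S. w P * P i) = R i))"

definition class_I :: "nat \<Rightarrow> (nat \<Rightarrow> real) set \<Rightarrow> bool" where
  "class_I M \<P> \<longleftrightarrow> \<P> \<noteq> {} \<and> (\<forall>P\<in>\<P>. prob_dist M P) \<and> in_conv_hull M (uniform_dist M) \<P>"

text \<open>Mechanism: Q i j = Q(j|i), probability of releasing j on input i; row-stochastic.\<close>
definition mechanism :: "nat \<Rightarrow> (nat \<Rightarrow> nat \<Rightarrow> real) \<Rightarrow> bool" where
  "mechanism M Q \<longleftrightarrow> (\<forall>i\<in>{1..M}. (\<forall>j\<in>{1..M}. Q i j \<ge> 0) \<and> (\<Sum>j\<in>{1..M}. Q i j) = 1)"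

definition distortion :: "(nat \<Rightarrow> nat \<Rightarrow> real) \<Rightarrow> nat \<Rightarrow> real" where
  "distortion Q i = 1 - Q i i"

definition valid_mech :: "nat \<Rightarrow> (nat \<Rightarrow> real) set \<Rightarrow> real \<Rightarrow> (nat \<Rightarrow> nat \<Rightarrow> real) set" where
  "valid_mech M \<P> D = {Q. mechanism M Q \<and>
      (\<forall>P\<in>\<P>. (\<Sum>i\<in>{1..M}. P i * distortion Q i) \<le> D)}"

text \<open>DP leakage, valued in extended reals (infinity if no finite epsilon works).\<close>
definition eps_DP :: "nat \<Rightarrow> (nat \<Rightarrow> nat \<Rightarrow> real) \<Rightarrow> ereal" where
  "eps_DP M Q = Inf {ereal e | e. e \<ge> 0 \<and>
      (\<forall>x1\<in>{1..M}. \<forall>x2\<in>{1..M}. \<forall>xh\<in>{1..M}. Q x1 xh \<le> exp e * Q x2 xh)}"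

definition eps_DP_opt :: "nat \<Rightarrow> (nat \<Rightarrow> real) set \<Rightarrow> real \<Rightarrow> ereal" where
  "eps_DP_opt M \<P> D = Inf (eps_DP M ` valid_mech M \<P> D)"

end

theory Submission
  imports Defs
begin

text \<open>Lower bound: averaging the distortion constraint against the convex combination that
  yields the uniform distribution forces the trace of Q to be at least M(1 - D). On the other
  hand, DP with parameter e gives Q(j|i) \<ge> exp(-e) Q(j|j), so each row sum is at least
  Q(i|i) + exp(-e) (trace - Q(i|i)); summing the rows bounds the trace from above, and the two
  bounds together yield (M - 1)(1 - D) \<le> D exp(e).
  Upper bound: randomized response, keeping the input with probability 1 - d and releasing each
  other symbol with probability d/(M - 1), has distortion d at every input and leakage
  ln((M - 1)(1 - d)/d). Take d = D, or d = (M - 1)/M (the constant mechanism) once D exceeds it.\<close>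

definition dp_bounded :: "nat \<Rightarrow> (nat \<Rightarrow> nat \<Rightarrow> real) \<Rightarrow> real \<Rightarrow> bool" where
  "dp_bounded M Q e \<longleftrightarrow> (\<forall>x1\<in>{1..M}. \<forall>x2\<in>{1..M}. \<forall>xh\<in>{1..M}. Q x1 xh \<le> exp e * Q x2 xh)"

lemma eps_DP_eq_Inf_dp_bounded:
  "eps_DP M Q = Inf {ereal e | e. e \<ge> 0 \<and> dp_bounded M Q e}"
  by (simp add: eps_DP_def dp_bounded_def)

lemma eps_DP_le:
  assumes "e \<ge> 0" and "dp_bounded M Q e"
  shows "eps_DP M Q \<le> ereal e"
  unfolding eps_DP_eq_Inf_dp_bounded by (rule Inf_lower) (use assms in auto)

lemma eps_DP_ge:
  assumes "\<And>e. e \<ge> 0 \<Longrightarrow> dp_bounded M Q e \<Longrightarrow> c \<le> e"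
  shows "ereal c \<le> eps_DP M Q"
  unfolding eps_DP_eq_Inf_dp_bounded by (rule Inf_greatest) (use assms in auto)

lemma dp_bounded_if_entries_between:
  assumes "0 < b" and "\<And>i j. i \<in> {1..M} \<Longrightarrow> j \<in> {1..M} \<Longrightarrow> b \<le> Q i j \<and> Q i j \<le> a"
  shows "dp_bounded M Q (ln (a / b))"
  unfolding dp_bounded_def
proof (intro ballI)
  fix x1 x2 xh assume "x1 \<in> {1..M}" "x2 \<in> {1..M}" "xh \<in> {1..M}"
  then have "Q x1 xh \<le> a" "b \<le> Q x2 xh" "b \<le> a" using assms(2) by (meson order.trans)+
  have "Q x1 xh \<le> a / b * b" using \<open>Q x1 xh \<le> a\<close> \<open>0 < b\<close> by simp
  also have "\<dots> \<le> a / b * Q x2 xh"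
    using \<open>b \<le> Q x2 xh\<close> \<open>b \<le> a\<close> \<open>0 < b\<close> by (intro mult_left_mono) auto
  also have "a / b = exp (ln (a / b))" using \<open>b \<le> a\<close> \<open>0 < b\<close> by simp
  finally show "Q x1 xh \<le> exp (ln (a / b)) * Q x2 xh" .
qed


lemma distortion_le_at_conv_hull:
  assumes "Q \<in> valid_mech M \<P> D" and "in_conv_hull M R \<P>"
  shows "(\<Sum>i\<in>{1..M}. R i * distortion Q i) \<le> D"
proof -
  obtain S w where S: "S \<subseteq> \<P>" "\<forall>P\<in>S. w P \<ge> 0" "(\<Sum>P\<in>S. w P) = 1"
      and R: "\<And>i. (\<Sum>P\<in>S. w P * P i) = R i"
    using assms(2) unfolding in_conv_hull_def by blast
  have "(\<Sum>i\<in>{1..M}. R i * distortion Q i)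
      = (\<Sum>P\<in>S. w P * (\<Sum>i\<in>{1..M}. P i * distortion Q i))"
    by (simp add: R[symmetric] sum_distrib_left sum_distrib_right mult.assoc sum.swap[of _ S])
  also have "\<dots> \<le> (\<Sum>P\<in>S. w P * D)"
    using assms(1) S(1,2) by (intro sum_mono mult_left_mono) (auto simp: valid_mech_def)
  also have "\<dots> = D" using S(3) by (simp add: sum_distrib_right[symmetric])
  finally show ?thesis .
qed

lemma trace_ge_if_class_I:
  assumes "M \<ge> 1" and "class_I M \<P>" and "Q \<in> valid_mech M \<P> D"
  shows "real M * (1 - D) \<le> (\<Sum>i\<in>{1..M}. Q i i)"
proof -
  have "(\<Sum>i\<in>{1..M}. uniform_dist M i * distortion Q i) \<le> D"
    using assms(2,3) by (intro distortion_le_at_conv_hull) (auto simp: class_I_def)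
  also have "(\<Sum>i\<in>{1..M}. uniform_dist M i * distortion Q i)
      = (real M - (\<Sum>i\<in>{1..M}. Q i i)) / real M"
    by (simp add: uniform_dist_def distortion_def sum_divide_distrib[symmetric] sum_subtractf)
  finally show ?thesis using assms(1) by (simp add: divide_le_eq algebra_simps)
qed


lemma dp_bounded_trace_le:
  assumes "mechanism M Q" and "dp_bounded M Q e"
  shows "(\<Sum>i\<in>{1..M}. Q i i) * (1 + exp (- e) * (real M - 1)) \<le> real M"
proof -
  define S where "S = (\<Sum>i\<in>{1..M}. Q i i)"
  define k where "k = exp (- e)"
  have row: "Q i i + k * (S - Q i i) \<le> 1" if i: "i \<in> {1..M}" for i
  proof -
    have "k * (S - Q i i) = (\<Sum>j\<in>{1..M}-{i}. k * Q j j)"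
      using i by (simp add: S_def sum_distrib_left[symmetric] sum_diff1)
    also have "\<dots> \<le> (\<Sum>j\<in>{1..M}-{i}. Q i j)"
    proof (rule sum_mono)
      fix j assume "j \<in> {1..M}-{i}"
      then have "Q j j \<le> exp e * Q i j" using assms(2) i by (auto simp: dp_bounded_def)
      then have "k * Q j j \<le> k * (exp e * Q i j)" by (simp add: k_def)
      then show "k * Q j j \<le> Q i j" by (simp add: k_def mult.assoc[symmetric] exp_minus)
    qed
    also have "\<dots> = (\<Sum>j\<in>{1..M}. Q i j) - Q i i" using i by (simp add: sum_diff1)
    also have "\<dots> = 1 - Q i i" using assms(1) i by (simp add: mechanism_def)
    finally show ?thesis by simp
  qed
  have "S + k * (real M * S - S) = (\<Sum>i\<in>{1..M}. Q i i + k * (S - Q i i))"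
    by (simp add: sum.distrib sum_distrib_left[symmetric] sum_subtractf S_def)
  also have "\<dots> \<le> (\<Sum>i\<in>{1..M}. 1)" by (rule sum_mono) (use row in auto)
  finally show ?thesis by (simp add: S_def k_def algebra_simps)
qed

lemma dp_bounded_leakage_ge:
  assumes "M \<ge> 1" and "class_I M \<P>" and "Q \<in> valid_mech M \<P> D" and "dp_bounded M Q e"
  shows "(real M - 1) * (1 - D) \<le> D * exp e"
proof -
  define f where "f = 1 + exp (- e) * (real M - 1)"
  have "f > 0" using assms(1) by (simp add: f_def add_pos_nonneg)
  have "real M * (1 - D) * f \<le> (\<Sum>i\<in>{1..M}. Q i i) * f"
    using trace_ge_if_class_I[OF assms(1-3)] \<open>f > 0\<close> by (simp add: mult_right_mono)
  also have "\<dots> \<le> real M * 1"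
    using dp_bounded_trace_le assms(3,4) by (simp add: f_def valid_mech_def)
  finally have "(1 - D) * f \<le> 1" using assms(1) by (simp add: mult.assoc)
  then have "(1 - D) * (real M - 1) * exp (- e) \<le> D" by (simp add: f_def algebra_simps)
  then have "(1 - D) * (real M - 1) * exp (- e) * exp e \<le> D * exp e" by simp
  moreover have "(1 - D) * (real M - 1) * exp (- e) * exp e = (real M - 1) * (1 - D)"
    by (simp add: exp_minus field_simps)
  ultimately show ?thesis by simp
qed

definition optimal_dp_leakage :: "nat \<Rightarrow> real \<Rightarrow> real" where
  "optimal_dp_leakage M D =
     (if D < (real M - 1) / real M then ln ((real M - 1) * (1 - D) / D) else 0)"

lemma optimal_dp_leakage_le:
  assumes "M \<ge> 1" and "0 < D" and "e \<ge> 0" and "(real M - 1) * (1 - D) \<le> D * exp e"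
  shows "optimal_dp_leakage M D \<le> e"
proof (cases "D < (real M - 1) / real M")
  case True
  then have "D < (real M - 1) * (1 - D)" using assms(1) by (simp add: field_simps)
  then have "0 < (real M - 1) * (1 - D) / D" using assms(2) by simp
  moreover have "(real M - 1) * (1 - D) / D \<le> exp e"
    using assms(2,4) by (simp add: divide_le_eq mult.commute)
  ultimately have "ln ((real M - 1) * (1 - D) / D) \<le> ln (exp e)" by (subst ln_le_cancel_iff) auto
  then show ?thesis using True by (simp add: optimal_dp_leakage_def)
qed (use assms(3) in \<open>simp add: optimal_dp_leakage_def\<close>)

lemma optimal_dp_leakage_le_eps_DP:
  assumes "M \<ge> 1" and "class_I M \<P>" and "Q \<in> valid_mech M \<P> D" and "0 < D"
  shows "ereal (optimal_dp_leakage M D) \<le> eps_DP M Q"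
  using assms by (intro eps_DP_ge optimal_dp_leakage_le dp_bounded_leakage_ge)


definition randomized_response :: "nat \<Rightarrow> real \<Rightarrow> nat \<Rightarrow> nat \<Rightarrow> real" where
  "randomized_response M d i j = (if i = j then 1 - d else d / (real M - 1))"

lemma mechanism_randomized_response:
  assumes "M \<ge> 2" and "0 \<le> d" and "d \<le> 1"
  shows "mechanism M (randomized_response M d)"
  unfolding mechanism_def
proof (intro ballI conjI)
  fix i j assume "i \<in> {1..M}" "j \<in> {1..M}"
  show "randomized_response M d i j \<ge> 0" using assms by (simp add: randomized_response_def)
next
  fix i assume i: "i \<in> {1..M}"
  have "(\<Sum>j\<in>{1..M}. randomized_response M d i j)
      = 1 - d + (\<Sum>j\<in>{1..M}-{i}. d / (real M - 1))"
    using i by (simp add: sum.remove randomized_response_def)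
  also have "\<dots> = 1" using i assms(1) by (simp add: of_nat_diff)
  finally show "(\<Sum>j\<in>{1..M}. randomized_response M d i j) = 1" .
qed

lemma dp_bounded_randomized_response:
  assumes "M \<ge> 2" and "0 < d" and "d \<le> (real M - 1) / real M"
  shows "dp_bounded M (randomized_response M d) (ln ((real M - 1) * (1 - d) / d))"
proof -
  have "d / (real M - 1) \<le> 1 - d" using assms by (simp add: field_simps)
  then have "dp_bounded M (randomized_response M d) (ln ((1 - d) / (d / (real M - 1))))"
    using assms(1,2) by (intro dp_bounded_if_entries_between) (auto simp: randomized_response_def)
  then show ?thesis by (simp add: field_simps)
qed

lemma valid_mech_if_distortion_le:
  assumes "mechanism M Q" and "\<forall>P\<in>\<P>. prob_dist M P" and "\<And>i. i \<in> {1..M} \<Longrightarrow> distortion Q i \<le> D"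
  shows "Q \<in> valid_mech M \<P> D"
  unfolding valid_mech_def
proof (intro CollectI conjI ballI assms(1))
  fix P assume "P \<in> \<P>"
  then have P: "\<forall>i\<in>{1..M}. P i \<ge> 0" "(\<Sum>i\<in>{1..M}. P i) = 1"
    using assms(2) by (auto simp: prob_dist_def)
  have "(\<Sum>i\<in>{1..M}. P i * distortion Q i) \<le> (\<Sum>i\<in>{1..M}. P i * D)"
    using P(1) assms(3) by (intro sum_mono mult_left_mono) auto
  also have "\<dots> = D" using P(2) by (simp add: sum_distrib_right[symmetric])
  finally show "(\<Sum>i\<in>{1..M}. P i * distortion Q i) \<le> D" .
qed

lemma randomized_response_optimal:
  assumes "M \<ge> 2" and "class_I M \<P>" and "0 < D" and "D \<le> 1"
  defines "d \<equiv> min D ((real M - 1) / real M)"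
  shows "randomized_response M d \<in> valid_mech M \<P> D"
    and "eps_DP M (randomized_response M d) \<le> ereal (optimal_dp_leakage M D)"
proof -
  have d: "0 < d" "d \<le> D" "d \<le> (real M - 1) / real M" using assms by (auto simp: d_def)
  show "randomized_response M d \<in> valid_mech M \<P> D"
    using assms(1,2,4) d
    by (intro valid_mech_if_distortion_le mechanism_randomized_response)
       (auto simp: class_I_def distortion_def randomized_response_def)
  have "optimal_dp_leakage M D = ln ((real M - 1) * (1 - d) / d)"
    using assms(1,3) by (simp add: optimal_dp_leakage_def d_def min_def field_simps)
  moreover have "0 \<le> optimal_dp_leakage M D"
    using assms(1,3) by (simp add: optimal_dp_leakage_def field_simps)
  ultimately show "eps_DP M (randomized_response M d) \<le> ereal (optimal_dp_leakage M D)"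
    using dp_bounded_randomized_response[OF assms(1) d(1,3)] by (simp add: eps_DP_le)
qed

theorem theorem1:
  fixes M :: nat and \<P> :: "(nat \<Rightarrow> real) set" and D :: real
  assumes "M \<ge> 2" and "class_I M \<P>" and "0 < D" and "D \<le> 1"
  shows "eps_DP_opt M \<P> D =
           (if D < (real M - 1) / real M
            then ereal (ln ((real M - 1) * (1 - D) / D)) else 0)
       \<and> (\<exists>Q\<in>valid_mech M \<P> D. eps_DP M Q = eps_DP_opt M \<P> D)"
proof -
  define Q where "Q = randomized_response M (min D ((real M - 1) / real M))"
  have valid: "Q \<in> valid_mech M \<P> D" and upper: "eps_DP M Q \<le> ereal (optimal_dp_leakage M D)"
    using randomized_response_optimal[OF assms] by (simp_all add: Q_def)
  have lower: "ereal (optimal_dp_leakage M D) \<le> eps_DP M Q'" if "Q' \<in> valid_mech M \<P> D" for Q'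
    using optimal_dp_leakage_le_eps_DP assms that by simp
  have eps_Q: "eps_DP M Q = ereal (optimal_dp_leakage M D)"
    using upper lower[OF valid] by (rule antisym)
  have "eps_DP_opt M \<P> D = ereal (optimal_dp_leakage M D)"
    unfolding eps_DP_opt_def
    by (rule antisym, metis valid eps_Q INF_lower, rule INF_greatest, rule lower)
  then show ?thesis
    using valid eps_Q by (auto simp: optimal_dp_leakage_def zero_ereal_def)
qed

end
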